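(* A query $Q$ is hierarchical if and only if its multivariate extension $\widehat Q$ is acyclic (i.e., every component $\widehat Q_\sigma$ of $\widehat Q$ is $\alpha$-acyclic).
   Context: A query is a full conjunctive query $Q = R_1(\mathbf X_1)\wedge\cdots\wedge R_k(\mathbf X_k)$. For a variable $X$, $\mathrm{at}(X)$ is the set of atoms whose schema contains $X$. $Q$ is hierarchical if for any two variables $X,Y$, either $\mathrm{at}(X)\subseteq\mathrm{at}(Y)$, or $\mathrm{at}(Y)\subseteq\mathrm{at}(X)$, or $\mathrm{at}(X)\cap\mathrm{at}(Y)=\emptyset$. A query is ($\alpha$-)acyclic if it has a join tree: a tree whose nodes are its atoms such that, for every variable, the atoms containing it form a connected subtree. Multivariate extension: take fresh variables $Z_1,\dots,Z_k$. For a permutation $\sigma$ of $[k]$, the component $\widehat Q_\sigma$ replaces each atom $R_{\sigma_i}(\mathbf X_{\sigma_i})$ by $\widehat R_{\sigma_i}(Z_1,\dots,Z_i,\mathbf X_{\sigma_i})$; $\widehat Q$ is the union of all $k!$ components, and it is called acyclic when each component is. *)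

theory Defs
  imports "HOL-Combinatorics.Permutations"
begin

text \<open>A query with k atoms is a list of k schemas (sets of variables); atom i is
  identified with its index i < k. Relation names play no role for
  hierarchicality or acyclicity, and distinct indices are distinct atoms.\<close>

type_synonym 'v query = "'v set list"

definition atoms_of :: "'v query \<Rightarrow> 'v \<Rightarrow> nat set" where
  "atoms_of Q X = {i. i < length Q \<and> X \<in> Q ! i}"

definition hierarchical :: "'v query \<Rightarrow> bool" where
  "hierarchical Q \<longleftrightarrow> (\<forall>X Y. atoms_of Q X \<subseteq> atoms_of Q Y \<or> atoms_of Q Y \<subseteq> atoms_of Q X
                          \<or> atoms_of Q X \<inter> atoms_of Q Y = {})"

inductive reach_in :: "nat set set \<Rightarrow> nat set \<Rightarrow> nat \<Rightarrow> nat \<Rightarrow> bool"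
  for E :: "nat set set" and S :: "nat set" where
  refl: "u \<in> S \<Longrightarrow> reach_in E S u u"
| step: "reach_in E S u v \<Longrightarrow> {v, w} \<in> E \<Longrightarrow> w \<in> S \<Longrightarrow> reach_in E S u w"

definition connected_in :: "nat set set \<Rightarrow> nat set \<Rightarrow> bool" where
  "connected_in E S \<longleftrightarrow> (\<forall>u\<in>S. \<forall>v\<in>S. reach_in E S u v)"

text \<open>A tree on vertex set V: a connected graph with no cycle, i.e. every edge is a bridge.\<close>

definition is_tree :: "nat set \<Rightarrow> nat set set \<Rightarrow> bool" where
  "is_tree V E \<longleftrightarrow>
     E \<subseteq> {{u, v} | u v. u \<in> V \<and> v \<in> V \<and> u \<noteq> v}
   \<and> connected_in E V
   \<and> (\<forall>u v. {u, v} \<in> E \<longrightarrow> \<not> reach_in (E - {{u, v}}) V u v)"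

definition join_tree :: "'v query \<Rightarrow> nat set set \<Rightarrow> bool" where
  "join_tree Q E \<longleftrightarrow> is_tree {..<length Q} E \<and> (\<forall>X. connected_in E (atoms_of Q X))"

definition alpha_acyclic :: "'v query \<Rightarrow> bool" where
  "alpha_acyclic Q \<longleftrightarrow> (\<exists>E. join_tree Q E)"

text \<open>Fresh variables Z_1,...,Z_k are Inr 0,...,Inr (k-1);
  original variables are Inl X. For a permutation \<sigma> of {0..<k}, the atom at
  (0-based) position i is R_{\<sigma> i} extended with Z_1..Z_{i+1}.\<close>

definition mv_component :: "'v query \<Rightarrow> (nat \<Rightarrow> nat) \<Rightarrow> ('v + nat) query" where
  "mv_component Q \<sigma> = map (\<lambda>i. Inr ` {..i} \<union> Inl ` (Q ! (\<sigma> i))) [0..<length Q]"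

definition mv_extension_acyclic :: "'v query \<Rightarrow> bool" where
  "mv_extension_acyclic Q \<longleftrightarrow>
     (\<forall>\<sigma>. \<sigma> permutes {..<length Q} \<longrightarrow> alpha_acyclic (mv_component Q \<sigma>))"

end

theory Submission
  imports Defs
begin

text \<open>
  Hierarchical implies acyclic: in a component, the positions of an original variable form a
  laminar family. Give every atom \<open>i\<close> but the last a parent \<open>p i > i\<close>: among the variables of
  atom \<open>i\<close> that occur again later, their position sets all contain \<open>i\<close> and hence form a chain,
  so the last position of the smallest one lies in all of them. Increasing parent pointers form
  a tree, and each variable's positions (for the fresh variable \<open>Z\<^sub>j\<close> a suffix) are closed under
  parents below their maximum, hence connected.

  Acyclic implies hierarchical: if \<open>X\<close> occurs in atoms \<open>a, c\<close> but not \<open>b\<close>, and \<open>Y\<close> in \<open>b, c\<close> but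
  not \<open>a\<close>, order the atoms so that \<open>c, a, b\<close> come last. The last two fresh variables force the
  tree edge \<open>{a, b}\<close> and an edge from \<open>c\<close> to \<open>a\<close> or \<open>b\<close>; the path joining the atoms of \<open>Y\<close>,
  respectively \<open>X\<close>, then closes a cycle.
\<close>

lemma reach_in_mem: "reach_in E S u v \<Longrightarrow> u \<in> S \<and> v \<in> S"
  by (induction rule: reach_in.induct) auto

lemma reach_in_trans:
  assumes "reach_in E S u v" and "reach_in E S v w"
  shows "reach_in E S u w"
  using assms(2,1) by (induction rule: reach_in.induct) (auto intro: reach_in.step)

lemma reach_in_edge: "{u, v} \<in> E \<Longrightarrow> u \<in> S \<Longrightarrow> v \<in> S \<Longrightarrow> reach_in E S u v"
  by (meson reach_in.refl reach_in.step)

lemma reach_in_sym: "reach_in E S u v \<Longrightarrow> reach_in E S v u"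
proof (induction rule: reach_in.induct)
  case (refl u)
  then show ?case by (rule reach_in.refl)
next
  case (step u v w)
  have "reach_in E S w v"
    using reach_in_edge[of w v E S] step.hyps reach_in_mem by (metis insert_commute)
  then show ?case using step.IH by (rule reach_in_trans)
qed

lemma reach_in_first_edge: "reach_in E S u v \<Longrightarrow> u = v \<or> (\<exists>w\<in>S. w \<noteq> u \<and> {u, w} \<in> E)"
  by (induction rule: reach_in.induct) auto

lemma reach_in_mono:
  assumes "reach_in E S u v" and "\<And>e. e \<in> E \<Longrightarrow> e \<subseteq> S \<Longrightarrow> e \<in> E'" and "S \<subseteq> S'"
  shows "reach_in E' S' u v"
  using assms
proof (induction rule: reach_in.induct)
  case (refl u)
  then show ?case by (auto intro: reach_in.refl)
next
  case (step u v w)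
  then have "{v, w} \<in> E'" using reach_in_mem by blast
  with step show ?case by (auto intro: reach_in.step)
qed

lemma connected_in_doubleton_edge: "connected_in E {u, v} \<Longrightarrow> u \<noteq> v \<Longrightarrow> {u, v} \<in> E"
  unfolding connected_in_def by (metis reach_in_first_edge singletonD insert_iff)

lemma connected_in_parent:
  assumes "finite P"
    and parent: "\<And>i. i \<in> P \<Longrightarrow> i < Max P \<Longrightarrow> p i \<in> P \<and> i < p i \<and> {i, p i} \<in> E"
  shows "connected_in E P"
proof -
  have reach_Max: "reach_in E P i (Max P)" if "i \<in> P" for i
    using that
  proof (induction "Max P - i" arbitrary: i rule: less_induct)
    case less
    have "i \<le> Max P" using \<open>finite P\<close> less.prems by simp
    show ?case
    proof (cases "i = Max P")
      case True
      then show ?thesis using less.prems by (simp add: reach_in.refl)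
    next
      case False
      with \<open>i \<le> Max P\<close> have "p i \<in> P" "i < p i" "{i, p i} \<in> E"
        using parent less.prems by auto
      moreover have "p i \<le> Max P" using \<open>finite P\<close> \<open>p i \<in> P\<close> by simp
      ultimately have "reach_in E P (p i) (Max P)"
        using less.hyps by simp
      moreover have "reach_in E P i (p i)"
        using reach_in_edge \<open>{i, p i} \<in> E\<close> less.prems \<open>p i \<in> P\<close> by blast
      ultimately show ?thesis by (rule reach_in_trans[rotated])
    qed
  qed
  show ?thesis
    unfolding connected_in_def
  proof (intro ballI)
    fix u v
    assume "u \<in> P" "v \<in> P"
    then show "reach_in E P u v"
      using reach_Max reach_in_sym reach_in_trans by metis
  qed
qed

definition parent_edges :: "(nat \<Rightarrow> nat) \<Rightarrow> nat \<Rightarrow> nat set set" where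
  "parent_edges p k = {{i, p i} | i. Suc i < k}"

text \<open>The vertices whose parent chain leads to \<open>j\<close> are closed under every edge
  except \<open>{j, p j}\<close>, and \<open>p j\<close> is not among them because \<open>p\<close> increases along edges.\<close>

lemma parent_edge_not_reach:
  assumes inc: "\<And>i. Suc i < k \<Longrightarrow> i < p i" and "Suc j < k"
  shows "\<not> reach_in (parent_edges p k - {{j, p j}}) V j (p j)"
proof
  define R where "R = {(i, p i) | i. Suc i < k}"
  define D where "D = {x. (x, j) \<in> R\<^sup>*}"
  have closed: "w \<in> D" if "reach_in (parent_edges p k - {{j, p j}}) V u w" "u \<in> D" for u w
    using that
  proof (induction rule: reach_in.induct)
    case (step u v w)
    then have "v \<in> D" by blast
    from step.hyps(2) obtain i where "Suc i < k" "{v, w} = {i, p i}" "i \<noteq> j"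
      by (auto simp: parent_edges_def)
    then consider "v = i" "w = p i" | "v = p i" "w = i" by (auto simp: doubleton_eq_iff)
    then show ?case
    proof cases
      case 1
      with \<open>v \<in> D\<close> \<open>i \<noteq> j\<close> obtain y where "(i, y) \<in> R" "(y, j) \<in> R\<^sup>*"
        unfolding D_def by (auto elim: converse_rtranclE)
      then show ?thesis using 1 unfolding R_def D_def by auto
    next
      case 2
      with \<open>v \<in> D\<close> \<open>Suc i < k\<close> show ?thesis
        unfolding D_def R_def by (auto intro: converse_rtrancl_into_rtrancl)
    qed
  qed simp
  have R_le: "(x, y) \<in> R\<^sup>* \<Longrightarrow> x \<le> y" for x y
    by (induction rule: rtrancl_induct) (auto simp: R_def dest: inc)
  assume "reach_in (parent_edges p k - {{j, p j}}) V j (p j)"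
  with closed have "p j \<in> D" unfolding D_def by blast
  then have "p j \<le> j" unfolding D_def using R_le by blast
  with inc[OF \<open>Suc j < k\<close>] show False by simp
qed

lemma is_tree_parent_edges:
  assumes parent: "\<And>i. Suc i < k \<Longrightarrow> i < p i \<and> p i < k"
  shows "is_tree {..<k} (parent_edges p k)"
  unfolding is_tree_def
proof (intro conjI allI impI)
  show "parent_edges p k \<subseteq> {{u, v} | u v. u \<in> {..<k} \<and> v \<in> {..<k} \<and> u \<noteq> v}"
    using parent by (fastforce simp: parent_edges_def)
  show "connected_in (parent_edges p k) {..<k}"
  proof (rule connected_in_parent)
    fix i
    assume "i \<in> {..<k}" "i < Max {..<k}"
    then have "Suc i < k" using Max_in[of "{..<k}"] by fastforce
    then show "p i \<in> {..<k} \<and> i < p i \<and> {i, p i} \<in> parent_edges p k"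
      using parent by (auto simp: parent_edges_def)
  qed simp
next
  fix u v
  assume "{u, v} \<in> parent_edges p k"
  then obtain j where "Suc j < k" and uv: "{u, v} = {j, p j}" by (auto simp: parent_edges_def)
  then have "\<not> reach_in (parent_edges p k - {{u, v}}) {..<k} j (p j)"
    using parent_edge_not_reach[of k p j] parent by auto
  with uv show "\<not> reach_in (parent_edges p k - {{u, v}}) {..<k} u v"
    by (auto simp: doubleton_eq_iff dest: reach_in_sym)
qed

lemma is_tree_edge_no_detour:
  assumes tree: "is_tree V E" and uv: "{u, v} \<in> E" and wv: "{w, v} \<in> E" and "u \<noteq> w"
    and "S \<subseteq> V" and "v \<notin> S" and path: "reach_in E S u w"
  shows False
proof -
  have "reach_in (E - {{u, v}}) V u w"
    using path by (rule reach_in_mono) (use \<open>S \<subseteq> V\<close> \<open>v \<notin> S\<close> in auto)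
  moreover have "{w, v} \<in> E - {{u, v}}" using wv \<open>u \<noteq> w\<close> by (auto simp: doubleton_eq_iff)
  moreover have "v \<in> V" using tree uv unfolding is_tree_def by (auto simp: doubleton_eq_iff)
  ultimately have "reach_in (E - {{u, v}}) V u v" by (rule reach_in.step)
  with tree uv show False unfolding is_tree_def by blast
qed

lemma Max_atoms_of_less:
  assumes "i \<in> atoms_of C x"
  shows "Max (atoms_of C x) < length C"
proof -
  have "Max (atoms_of C x) \<in> atoms_of C x"
    using assms by (intro Max_in) (auto simp: atoms_of_def)
  then show ?thesis by (simp add: atoms_of_def)
qed

lemma join_tree_parent_edges:
  assumes parent: "\<And>i. Suc i < length C \<Longrightarrow> i < p i \<and> p i < length C"
    and running: "\<And>x i. Suc i < length C \<Longrightarrow> i \<in> atoms_of C x \<Longrightarrow> i < Max (atoms_of C x)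
      \<Longrightarrow> p i \<in> atoms_of C x"
  shows "join_tree C (parent_edges p (length C))"
  unfolding join_tree_def
proof (intro conjI allI)
  show "is_tree {..<length C} (parent_edges p (length C))"
    using parent by (rule is_tree_parent_edges)
next
  fix x
  have fin: "finite (atoms_of C x)" by (simp add: atoms_of_def)
  show "connected_in (parent_edges p (length C)) (atoms_of C x)"
  proof (rule connected_in_parent[OF fin])
    fix i
    assume i: "i \<in> atoms_of C x" "i < Max (atoms_of C x)"
    with Max_atoms_of_less[OF i(1)] have "Suc i < length C" by simp
    with i parent running
    show "p i \<in> atoms_of C x \<and> i < p i \<and> {i, p i} \<in> parent_edges p (length C)"
      by (auto simp: parent_edges_def)
  qed
qed

lemma laminar_common_member_above:
  fixes T :: "'a \<Rightarrow> nat set"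
  assumes laminar: "\<And>X Y. T X \<subseteq> T Y \<or> T Y \<subseteq> T X \<or> T X \<inter> T Y = {}"
    and fin: "\<And>X. finite (T X)"
    and X0: "i \<in> T X0" "i < Max (T X0)"
  shows "\<exists>l. i < l \<and> (\<forall>X. i \<in> T X \<longrightarrow> i < Max (T X) \<longrightarrow> l \<in> T X)"
proof -
  define W where "W = {X. i \<in> T X \<and> i < Max (T X)}"
  obtain Xm where "Xm \<in> W" and least: "\<And>Y. Y \<in> W \<Longrightarrow> Max (T Xm) \<le> Max (T Y)"
    using ex_has_least_nat[of "\<lambda>X. X \<in> W" X0 "\<lambda>X. Max (T X)"] X0 unfolding W_def by blast
  have "Max (T Xm) \<in> T Y" if "Y \<in> W" for Y
  proof -
    have ne: "T Xm \<noteq> {}" "T Y \<noteq> {}" using \<open>Xm \<in> W\<close> \<open>Y \<in> W\<close> unfolding W_def by auto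
    have "i \<in> T Xm \<inter> T Y" using \<open>Xm \<in> W\<close> \<open>Y \<in> W\<close> unfolding W_def by auto
    with laminar consider "T Xm \<subseteq> T Y" | "T Y \<subseteq> T Xm" by blast
    then show ?thesis
    proof cases
      case 1
      then show ?thesis using Max_in[OF fin ne(1)] by blast
    next
      case 2
      then have "Max (T Y) \<le> Max (T Xm)" using Max_mono[OF _ ne(2) fin] by blast
      with least[OF \<open>Y \<in> W\<close>] have "Max (T Xm) = Max (T Y)" by simp
      then show ?thesis using Max_in[OF fin ne(2)] by simp
    qed
  qed
  moreover have "i < Max (T Xm)" using \<open>Xm \<in> W\<close> unfolding W_def by simp
  ultimately show ?thesis unfolding W_def by blast
qed

lemma length_mv_component [simp]: "length (mv_component Q \<sigma>) = length Q"
  by (simp add: mv_component_def)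

lemma atoms_of_mv_component_Inl:
  assumes "\<sigma> permutes {..<length Q}"
  shows "atoms_of (mv_component Q \<sigma>) (Inl X) = {i. i < length Q \<and> \<sigma> i \<in> atoms_of Q X}"
proof -
  have "\<sigma> i < length Q" if "i < length Q" for i
    using permutes_in_image[OF assms] that by simp
  then show ?thesis by (auto simp: atoms_of_def mv_component_def)
qed

lemma atoms_of_mv_component_Inr:
  "atoms_of (mv_component Q \<sigma>) (Inr j) = {i. i < length Q \<and> j \<le> i}"
  by (auto simp: atoms_of_def mv_component_def)

lemma hierarchical_mv_component_Inl:
  assumes "hierarchical Q" and "\<sigma> permutes {..<length Q}"
  shows "atoms_of (mv_component Q \<sigma>) (Inl X) \<subseteq> atoms_of (mv_component Q \<sigma>) (Inl Y)
    \<or> atoms_of (mv_component Q \<sigma>) (Inl Y) \<subseteq> atoms_of (mv_component Q \<sigma>) (Inl X)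
    \<or> atoms_of (mv_component Q \<sigma>) (Inl X) \<inter> atoms_of (mv_component Q \<sigma>) (Inl Y) = {}"
  using assms(1) unfolding hierarchical_def atoms_of_mv_component_Inl[OF assms(2)] by blast

lemma hierarchical_imp_mv_component_acyclic:
  assumes hier: "hierarchical Q" and \<sigma>: "\<sigma> permutes {..<length Q}"
  shows "alpha_acyclic (mv_component Q \<sigma>)"
proof -
  define C where "C = mv_component Q \<sigma>"
  define T where "T X = atoms_of C (Inl X)" for X
  have laminar: "T X \<subseteq> T Y \<or> T Y \<subseteq> T X \<or> T X \<inter> T Y = {}" for X Y
    unfolding T_def C_def using hier \<sigma> by (rule hierarchical_mv_component_Inl)
  have fin: "finite (T X)" for X by (simp add: T_def atoms_of_def)
  have "\<exists>l. i < l \<and> l < length C \<and> (\<forall>X. i \<in> T X \<longrightarrow> i < Max (T X) \<longrightarrow> l \<in> T X)"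
    if "Suc i < length C" for i
  proof (cases "\<exists>X. i \<in> T X \<and> i < Max (T X)")
    case True
    then obtain X0 l where "i < l" and l: "\<forall>X. i \<in> T X \<longrightarrow> i < Max (T X) \<longrightarrow> l \<in> T X"
      and X0: "i \<in> T X0" "i < Max (T X0)"
      using laminar_common_member_above[OF laminar fin] by metis
    moreover have "l < length C" using l X0 by (auto simp: T_def atoms_of_def)
    ultimately show ?thesis by blast
  qed (use that in auto)
  then obtain p where parent: "\<And>i. Suc i < length C \<Longrightarrow> i < p i \<and> p i < length C"
    and running_Inl: "\<And>i X. Suc i < length C \<Longrightarrow> i \<in> T X \<Longrightarrow> i < Max (T X) \<Longrightarrow> p i \<in> T X"
    by metis
  have "join_tree C (parent_edges p (length C))"
  proof (rule join_tree_parent_edges[OF parent])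
    fix x i
    assume i: "Suc i < length C" "i \<in> atoms_of C x" "i < Max (atoms_of C x)"
    then show "p i \<in> atoms_of C x"
      using parent[OF i(1)] running_Inl unfolding T_def
      by (cases x) (auto simp: C_def atoms_of_mv_component_Inr)
  qed
  then show ?thesis unfolding alpha_acyclic_def C_def by blast
qed

lemma permutes_ending_with:
  assumes "distinct xs" and "set xs \<subseteq> {..<k}"
  obtains \<sigma> where "\<sigma> permutes {..<k}" and "\<And>j. j < length xs \<Longrightarrow> \<sigma> (k - length xs + j) = xs ! j"
proof -
  define F where "F = filter (\<lambda>i. i \<notin> set xs) [0..<k]"
  have "mset (F @ xs) = mset [0..<k]"
    using assms by (subst set_eq_iff_mset_eq_distinct[symmetric]) (auto simp: F_def)
  then obtain \<sigma> where \<sigma>: "\<sigma> permutes {..<k}" and "permute_list \<sigma> [0..<k] = F @ xs"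
    using mset_eq_permutation by (metis length_upt minus_nat.diff_0)
  then have "\<sigma> i = (F @ xs) ! i" if "i < k" for i
    using that by (metis length_upt permute_list_nth permutes_in_image lessThan_iff
        minus_nat.diff_0 nth_upt plus_nat.add_0)
  moreover have "length F + length xs = k"
    using \<open>mset (F @ xs) = mset [0..<k]\<close> by (metis length_append length_upt mset_eq_length minus_nat.diff_0)
  ultimately have "\<sigma> (k - length xs + j) = xs ! j" if "j < length xs" for j
    using that by (metis add_diff_cancel_right' nat_add_left_cancel_less nth_append_length_plus)
  with \<sigma> show thesis by (rule that)
qed

lemma not_alpha_acyclic_crossing:
  assumes z: "atoms_of C z = {u, v, w}" and z': "atoms_of C z' = {v, w}"
    and x: "u \<in> atoms_of C x" "v \<in> atoms_of C x" "w \<notin> atoms_of C x"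
    and y: "u \<in> atoms_of C y" "w \<in> atoms_of C y" "v \<notin> atoms_of C y"
  shows "\<not> alpha_acyclic C"
proof
  assume "alpha_acyclic C"
  then obtain E where tree: "is_tree {..<length C} E" and conn: "\<And>x. connected_in E (atoms_of C x)"
    unfolding alpha_acyclic_def join_tree_def by blast
  have sub: "atoms_of C x \<subseteq> {..<length C}" for x by (auto simp: atoms_of_def)
  have "u \<noteq> v" "u \<noteq> w" "v \<noteq> w" using x y by auto
  have "{v, w} \<in> E"
    using conn[of z'] \<open>v \<noteq> w\<close> unfolding z' by (rule connected_in_doubleton_edge)
  moreover have "{u, v} \<in> E \<or> {u, w} \<in> E"
  proof -
    have "reach_in E {u, v, w} u w" using conn[of z] unfolding z connected_in_def by blast
    then show ?thesis using reach_in_first_edge \<open>u \<noteq> w\<close> by fastforce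
  qed
  moreover have "reach_in E (atoms_of C y) u w" "reach_in E (atoms_of C x) u v"
    using conn x y unfolding connected_in_def by blast+
  ultimately show False
    using is_tree_edge_no_detour[OF tree, of u v w "atoms_of C y"]
      is_tree_edge_no_detour[OF tree, of u w v "atoms_of C x"] sub x y \<open>v \<noteq> w\<close>
    by (metis insert_commute)
qed

lemma mv_extension_acyclic_imp_hierarchical:
  assumes acyclic: "mv_extension_acyclic Q"
  shows "hierarchical Q"
proof (rule ccontr)
  assume "\<not> hierarchical Q"
  then obtain X Y a b c where a: "a \<in> atoms_of Q X" "a \<notin> atoms_of Q Y"
    and b: "b \<in> atoms_of Q Y" "b \<notin> atoms_of Q X"
    and c: "c \<in> atoms_of Q X" "c \<in> atoms_of Q Y"
    unfolding hierarchical_def by blast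
  have abc: "distinct [c, a, b]" "set [c, a, b] \<subseteq> {..<length Q}"
    using a b c by (auto simp: atoms_of_def)
  then have "length [c, a, b] \<le> length Q"
    using card_mono[OF finite_lessThan abc(2)] by (simp only: distinct_card card_lessThan)
  then have "3 \<le> length Q" by simp
  then obtain n where len: "length Q = n + 3" by (metis le_add_diff_inverse2)
  obtain \<sigma> where \<sigma>: "\<sigma> permutes {..<length Q}"
    and last: "\<And>j. j < length [c, a, b] \<Longrightarrow> \<sigma> (length Q - length [c, a, b] + j) = [c, a, b] ! j"
    using permutes_ending_with[OF abc] by blast
  define C where "C = mv_component Q \<sigma>"
  have "\<sigma> n = c" "\<sigma> (n + 1) = a" "\<sigma> (n + 2) = b"
    using last[of 0] last[of 1] last[of 2] by (simp_all add: len)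
  then have X: "n \<in> atoms_of C (Inl X)" "n + 1 \<in> atoms_of C (Inl X)" "n + 2 \<notin> atoms_of C (Inl X)"
    and Y: "n \<in> atoms_of C (Inl Y)" "n + 2 \<in> atoms_of C (Inl Y)" "n + 1 \<notin> atoms_of C (Inl Y)"
    using a b c unfolding C_def atoms_of_mv_component_Inl[OF \<sigma>] len by simp_all
  have "atoms_of C (Inr n) = {n, n + 1, n + 2}" "atoms_of C (Inr (n + 1)) = {n + 1, n + 2}"
    unfolding C_def atoms_of_mv_component_Inr len by auto
  then have "\<not> alpha_acyclic C"
    using X Y by (rule not_alpha_acyclic_crossing)
  with acyclic \<sigma> show False unfolding mv_extension_acyclic_def C_def by blast
qed

theorem mainTheorem7:
  fixes Q :: "'v query"
  shows "hierarchical Q \<longleftrightarrow> mv_extension_acyclic Q"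
  using hierarchical_imp_mv_component_acyclic mv_extension_acyclic_imp_hierarchical
  unfolding mv_extension_acyclic_def by blast

end
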